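(* Let $\alpha$ be a non-integer real number and $m\ge1$ an integer with $m\ge1+\alpha$, and let $\phi$ be $m$ times continuously differentiable on $(0,1]$. Suppose there exist finite constants $W>0$, $c_m$, $c'_m$ such that for all $p\in(0,1]$ $$|\phi^{(m)}(p)|\le\alpha_{m-1}Wp^{\alpha-m}+c_m\quad\text{and}\quad|\phi^{(m)}(p)|\ge\alpha_{m-1}Wp^{\alpha-m}+c'_m.$$ Then there exist finite constants $c_{m-1}$, $c'_{m-1}$ such that for all $p\in(0,1]$ $$|\phi^{(m-1)}(p)|\le\alpha_{m-2}Wp^{\alpha-m+1}+c_{m-1}\quad\text{and}\quad|\phi^{(m-1)}(p)|\ge\alpha_{m-2}Wp^{\alpha-m+1}+c'_{m-1}.$$
   Context: $\alpha_0=1$ and $\alpha_i=\prod_{j=1}^i(j-\alpha)$ for $i\ge1$. Here $\phi^{(0)}=\phi$. Differentiability at $1$ is one-sided. *)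

theory Defs
  imports "HOL-Analysis.Analysis"
begin

text \<open>The coefficients alpha_i: alpha_0 = 1, alpha_i = prod_{j=1..i} (j - alpha) for i >= 1.
  They are indexed by integers because the statement uses alpha_{m-2} with m >= 1.
  For i = -1 we use the unique value compatible with the recurrence
  alpha_i = (i - alpha) * alpha_{i-1} at i = 0, namely alpha_{-1} = 1/(-alpha)
  (only relevant when m = 1, which forces alpha < 0).  Other negative indices never occur.\<close>
definition alpha_coef :: "real \<Rightarrow> int \<Rightarrow> real" where
  "alpha_coef a i =
     (if i \<ge> 0 then (\<Prod>j = 1..nat i. (real j - a)) else 1 / (- a))"

end

theory Submission imports Defs begin

text \<open>Write A = alpha_(m-1) and B = alpha_(m-2), so that A = (m - 1 - a) B. The upper bound
  forces A > 0, and then the lower bound keeps the m-th derivative away from 0 near 0, so by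
  continuity it has a constant sign s there. Hence it differs from s A W p^(a-m) by a bounded
  function on all of (0,1]. By the mean value theorem, the (m-1)-th derivative then differs from
  the antiderivative -s B W p^(a-m+1) by a bounded function, which gives both bounds.\<close>

lemma alpha_coef_recurrence:
  assumes "a \<noteq> 0" and "m \<ge> 1"
  shows "(real m - 1 - a) * alpha_coef a (int m - 2) = alpha_coef a (int m - 1)"
proof (cases "m = 1")
  case True
  then show ?thesis using assms(1) by (simp add: alpha_coef_def)
next
  case False
  then obtain k where k: "m = Suc (Suc k)"
    using assms(2) by (metis Suc_le_D not0_implies_Suc One_nat_def)
  then have "nat (int m - 1) = Suc k" "nat (int m - 2) = k" by auto
  then show ?thesis using k by (simp add: alpha_coef_def prod.nat_ivl_Suc' algebra_simps)
qed

lemma alpha_coef_nonzero: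
  assumes "a \<notin> \<int>" and "i \<ge> 0"
  shows "alpha_coef a i \<noteq> 0"
proof -
  have "real j - a \<noteq> 0" for j :: nat
    using assms(1) by (metis Ints_of_nat eq_iff_diff_eq_0)
  then show ?thesis using assms(2) by (simp add: alpha_coef_def)
qed

lemma powr_neg_exponent_attains:
  fixes r T :: real
  assumes "r < 0" and "T \<ge> 1"
  shows "\<exists>p\<in>{0<..1}. p powr r = T"
proof
  show "T powr (1 / r) \<in> {0<..1}"
    using assms powr_mono2'[of "1/r" 1 T] by simp
  show "(T powr (1 / r)) powr r = T"
    using assms by (simp add: powr_powr)
qed

lemma powr_bound_coefficient_nonneg:
  fixes K c r :: real
  assumes "r < 0" and nonneg: "\<forall>p\<in>{0<..1}. 0 \<le> K * p powr r + c"
  shows "K \<ge> 0"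
proof (rule ccontr)
  assume "\<not> K \<ge> 0"
  then have K: "K < 0" by simp
  have "\<bar>c\<bar> / (- K) + 1 \<ge> 1" using K by (simp add: divide_nonneg_neg)
  then obtain p where p: "p \<in> {0<..1}" "p powr r = \<bar>c\<bar> / (- K) + 1"
    using powr_neg_exponent_attains[OF assms(1)] by blast
  have "K * p powr r + c = c - \<bar>c\<bar> + K"
    using K by (simp add: p(2) field_simps)
  also have "\<dots> < 0" using K by linarith
  finally show False using nonneg p(1) by fastforce
qed

lemma continuous_nonvanishing_sgn_eq:
  fixes f :: "real \<Rightarrow> real"
  assumes cont: "continuous_on {x..y} f" and "x \<le> y" and nz: "\<forall>t\<in>{x..y}. f t \<noteq> 0"
  shows "sgn (f x) = sgn (f y)"
proof (rule ccontr)
  assume "sgn (f x) \<noteq> sgn (f y)"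
  moreover have "f x \<noteq> 0" "f y \<noteq> 0" using nz \<open>x \<le> y\<close> by auto
  ultimately have "f x < 0 \<and> 0 < f y \<or> f y < 0 \<and> 0 < f x"
    by (metis linorder_neqE_linordered_idom sgn_neg sgn_pos)
  then obtain t where "t \<in> {x..y}" "f t = 0"
    using IVT'[of f x 0 y] IVT2'[of f y 0 x] cont \<open>x \<le> y\<close> by fastforce
  then show False using nz by blast
qed

lemma derivative_minus_powr_bounded:
  fixes f' :: "real \<Rightarrow> real" and K r c c' :: real
  assumes "r < 0" and "K > 0" and cont: "continuous_on {0<..1} f'"
    and up: "\<forall>p\<in>{0<..1}. \<bar>f' p\<bar> \<le> K * p powr r + c"
    and lo: "\<forall>p\<in>{0<..1}. \<bar>f' p\<bar> \<ge> K * p powr r + c'"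
  obtains s C where "\<bar>s\<bar> = 1" and "\<forall>p\<in>{0<..1}. \<bar>f' p - s * K * p powr r\<bar> \<le> C"
proof -
  have "\<bar>c'\<bar> / K + 1 \<ge> 1" using \<open>K > 0\<close> by simp
  then obtain \<epsilon> where \<epsilon>: "\<epsilon> \<in> {0<..1}" "\<epsilon> powr r = \<bar>c'\<bar> / K + 1"
    using powr_neg_exponent_attains[OF assms(1)] by blast
  have nz: "f' p \<noteq> 0" if "p \<in> {0<..\<epsilon>}" for p
  proof -
    have "\<bar>c'\<bar> + K = K * \<epsilon> powr r" using \<epsilon>(2) \<open>K > 0\<close> by (simp add: field_simps)
    also have "\<dots> \<le> K * p powr r"
      using powr_mono2'[of r p \<epsilon>] that assms(1,2) by (simp add: mult_left_mono)
    finally have "K * p powr r + c' > 0" using \<open>K > 0\<close> abs_ge_minus_self[of c'] by linarith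
    moreover have "p \<in> {0<..1}" using that \<epsilon>(1) by auto
    ultimately show ?thesis using lo by fastforce
  qed
  define s where "s = sgn (f' \<epsilon>)"
  have s: "\<bar>s\<bar> = 1" using nz \<epsilon>(1) by (simp add: s_def abs_sgn)
  have sign: "f' p = s * \<bar>f' p\<bar>" if p: "p \<in> {0<..\<epsilon>}" for p
  proof -
    have "continuous_on {p..\<epsilon>} f'" using cont by (rule continuous_on_subset) (use p \<epsilon>(1) in auto)
    moreover have "\<forall>t\<in>{p..\<epsilon>}. f' t \<noteq> 0" using nz p by auto
    ultimately have "sgn (f' p) = s"
      unfolding s_def using p by (intro continuous_nonvanishing_sgn_eq) auto
    then show ?thesis by (metis sgn_mult_abs)
  qed
  have "\<bar>f' p - s * K * p powr r\<bar> \<le> \<bar>c\<bar> + \<bar>c'\<bar> + 2 * (K * \<epsilon> powr r)"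
    if p: "p \<in> {0<..1}" for p
  proof (cases "p \<le> \<epsilon>")
    case True
    then have "f' p - s * K * p powr r = s * (\<bar>f' p\<bar> - K * p powr r)"
      using sign[of p] p by (simp add: algebra_simps)
    then have "\<bar>f' p - s * K * p powr r\<bar> = \<bar>\<bar>f' p\<bar> - K * p powr r\<bar>"
      using s by (simp add: abs_mult)
    also have "\<dots> \<le> \<bar>c\<bar> + \<bar>c'\<bar>"
      using up[rule_format, OF p] lo[rule_format, OF p] by (subst abs_le_iff) linarith
    moreover have "0 \<le> K * \<epsilon> powr r" using \<open>K > 0\<close> by simp
    ultimately show ?thesis by linarith
  next
    case False
    have "p powr r \<le> \<epsilon> powr r" using powr_mono2'[of r \<epsilon> p] False \<epsilon>(1) assms(1) by simp
    then have small: "K * p powr r \<le> K * \<epsilon> powr r"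
      using \<open>K > 0\<close> by simp
    have "\<bar>s * K * p powr r\<bar> = K * p powr r" using s \<open>K > 0\<close> by (simp add: abs_mult)
    then have "\<bar>f' p - s * K * p powr r\<bar> \<le> \<bar>f' p\<bar> + K * p powr r"
      using abs_triangle_ineq4[of "f' p" "s * K * p powr r"] by simp
    also have "\<dots> \<le> \<bar>c\<bar> + 2 * (K * p powr r)" using up[rule_format, OF p] by linarith
    finally show ?thesis using small by linarith
  qed
  then show thesis using that s by blast
qed

lemma antiderivative_powr_two_sided_bound:
  fixes f f' :: "real \<Rightarrow> real" and K r c c' :: real
  assumes "r < -1" and "K > 0"
    and deriv: "\<forall>p\<in>{0<..1}. (f has_real_derivative f' p) (at p within {0<..1})"
    and "continuous_on {0<..1} f'"
    and "\<forall>p\<in>{0<..1}. \<bar>f' p\<bar> \<le> K * p powr r + c"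
    and "\<forall>p\<in>{0<..1}. \<bar>f' p\<bar> \<ge> K * p powr r + c'"
  shows "\<exists>C. \<forall>p\<in>{0<..1}. \<bar>f p\<bar> \<le> K / (- 1 - r) * p powr (r + 1) + C \<and>
                          \<bar>f p\<bar> \<ge> K / (- 1 - r) * p powr (r + 1) + - C"
proof -
  obtain s C where s: "\<bar>s\<bar> = 1" and C: "\<forall>p\<in>{0<..1}. \<bar>f' p - s * K * p powr r\<bar> \<le> C"
    using derivative_minus_powr_bounded[of r K f' c c'] assms by auto
  define B where "B = K / (- 1 - r)"
  have B: "B > 0" "B * (r + 1) = - K" using assms(1,2) by (auto simp: B_def field_simps)
  define g where "g p = f p + s * B * p powr (r + 1)" for p
  have g': "(g has_real_derivative f' p - s * K * p powr r) (at p within {0<..1})"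
    if "p \<in> {0<..1}" for p
  proof -
    have "((\<lambda>p. p powr (r + 1)) has_real_derivative (r + 1) * p powr r) (at p within {0<..1})"
      using has_real_derivative_powr[of p "r + 1"] that by (auto intro: has_field_derivative_at_within)
    then have der: "(g has_real_derivative f' p + s * B * ((r + 1) * p powr r)) (at p within {0<..1})"
      unfolding g_def using deriv that by (intro DERIV_add DERIV_cmult) auto
    have "s * B * ((r + 1) * p powr r) = s * p powr r * (B * (r + 1))" by (simp add: algebra_simps)
    then have eq: "f' p + s * B * ((r + 1) * p powr r) = f' p - s * K * p powr r"
      using B(2) by simp
    show ?thesis using der unfolding eq .
  qed
  have "C \<ge> 0" using C[rule_format, of 1] by (simp add: order_trans[OF abs_ge_zero])
  have g_bounded: "\<bar>g p\<bar> \<le> \<bar>g 1\<bar> + C" if p: "p \<in> {0<..1}" for p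
  proof -
    have "norm (g p - g 1) \<le> C * norm (p - 1)"
      by (rule field_differentiable_bound[of "{0<..1}" g]) (use g' C p in auto)
    also have "\<dots> \<le> C" using p \<open>C \<ge> 0\<close> by (auto intro: mult_left_le)
    finally show ?thesis by simp
  qed
  have f_near_powr: "\<bar>\<bar>f p\<bar> - B * p powr (r + 1)\<bar> \<le> \<bar>g p\<bar>" for p
  proof -
    have "\<bar>s * B * p powr (r + 1)\<bar> = B * p powr (r + 1)" using s B(1) by (simp add: abs_mult)
    then show ?thesis
      using abs_triangle_ineq3[of "f p" "- s * B * p powr (r + 1)"] by (simp add: g_def)
  qed
  have "\<bar>f p\<bar> \<le> B * p powr (r + 1) + (\<bar>g 1\<bar> + C) \<and>
      \<bar>f p\<bar> \<ge> B * p powr (r + 1) + - (\<bar>g 1\<bar> + C)" if "p \<in> {0<..1}" for p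
    using g_bounded[OF that] f_near_powr[of p] unfolding abs_le_iff by linarith
  then show ?thesis unfolding B_def by blast
qed

theorem lemma15:
  fixes a :: real and m :: nat and phi :: "real \<Rightarrow> real"
    and D :: "nat \<Rightarrow> real \<Rightarrow> real" and W c c' :: real
  assumes "a \<notin> \<int>" and "m \<ge> 1" and "real m \<ge> 1 + a"
    and "D 0 = phi"
    and "\<forall>k<m. \<forall>p\<in>{0<..1}. (D k has_real_derivative D (Suc k) p) (at p within {0<..1})"
    and "continuous_on {0<..1} (D m)"
    and "W > 0"
    and "\<forall>p\<in>{0<..1}. \<bar>D m p\<bar> \<le> alpha_coef a (int m - 1) * W * p powr (a - real m) + c"
    and "\<forall>p\<in>{0<..1}. \<bar>D m p\<bar> \<ge> alpha_coef a (int m - 1) * W * p powr (a - real m) + c'"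
  shows "\<exists>c1 c1'. \<forall>p\<in>{0<..1}.
           \<bar>D (m - 1) p\<bar> \<le> alpha_coef a (int m - 2) * W * p powr (a - real m + 1) + c1 \<and>
           \<bar>D (m - 1) p\<bar> \<ge> alpha_coef a (int m - 2) * W * p powr (a - real m + 1) + c1'"
proof -
  define A where "A = alpha_coef a (int m - 1)"
  have up: "\<forall>p\<in>{0<..1}. \<bar>D m p\<bar> \<le> A * W * p powr (a - real m) + c"
    and lo: "\<forall>p\<in>{0<..1}. \<bar>D m p\<bar> \<ge> A * W * p powr (a - real m) + c'"
    using assms(8,9) by (simp_all only: A_def)
  have "real (m - 1) \<noteq> a" using assms(1) Ints_of_nat by metis
  then have gap: "real m - 1 - a > 0" using assms(2,3) by (simp add: of_nat_diff)
  have "A * W \<ge> 0"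
  proof (rule powr_bound_coefficient_nonneg)
    show "a - real m < 0" using gap by simp
    show "\<forall>p\<in>{0<..1}. 0 \<le> A * W * p powr (a - real m) + c"
      using up abs_ge_zero by (meson order_trans)
  qed
  moreover have "A \<noteq> 0" using alpha_coef_nonzero assms(1,2) by (simp add: A_def)
  ultimately have AW: "A * W > 0" using assms(7) by (simp add: zero_le_mult_iff)
  have "m - 1 < m" "Suc (m - 1) = m" using assms(2) by auto
  then have der: "\<forall>p\<in>{0<..1}. (D (m - 1) has_real_derivative D m p) (at p within {0<..1})"
    using assms(5) by metis
  have "a - real m < - 1" using gap by simp
  from antiderivative_powr_two_sided_bound[OF this AW der assms(6) up lo]
  obtain C where C: "\<forall>p\<in>{0<..1}.
      \<bar>D (m - 1) p\<bar> \<le> A * W / (- 1 - (a - real m)) * p powr (a - real m + 1) + C \<and>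
      \<bar>D (m - 1) p\<bar> \<ge> A * W / (- 1 - (a - real m)) * p powr (a - real m + 1) + - C"
    by blast
  have "a \<noteq> 0" using assms(1) by auto
  then have "A * W / (- 1 - (a - real m)) = alpha_coef a (int m - 2) * W"
    using alpha_coef_recurrence[of a m] assms(2) gap by (simp add: A_def field_simps)
  then show ?thesis using C by (intro exI[of _ C] exI[of _ "- C"]) (simp only:)
qed

end
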